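(* Let $A\subseteq\mathbb R^2$ be measurable and let $\gamma\in\mathbb R\setminus\{0,-1\}$. Let $\lambda,\eta:A\to(0,\infty)$ be intensity functions with $\int_A\lambda$, $\int_A\eta$, $\int_A\lambda^{\gamma+1}$, $\int_A\eta^{\gamma+1}$ and $\int_A\lambda\eta^\gamma$ all finite, and let $P$ and $Q$ be the distributions of the Poisson point processes on $A$ with intensities $\lambda$ and $\eta$, with densities $p,q$ as described in the context. Define the log $\gamma$-divergence $$\Delta_\gamma(P,Q)=-\frac1\gamma\log\frac{\mathbb E_P[q(\Xi)^\gamma]}{\{\mathbb E_Q[q(\Xi)^\gamma]\}^{\gamma/(\gamma+1)}\{\mathbb E_P[p(\Xi)^\gamma]\}^{1/(\gamma+1)}}$$ and the $\beta$-divergence between intensity functions $$D_\beta(\lambda,\eta)=-\frac1\beta\int_A\Big\{\lambda(s)\eta(s)^\beta-\frac{\beta}{\beta+1}\eta(s)^{\beta+1}-\frac{1}{\beta+1}\lambda(s)^{\beta+1}\Big\}\mathrm ds.$$ Then $\Delta_\gamma(P,Q)=D_\beta(\lambda,\eta)$ when $\beta=\gamma$.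
   Context: A Poisson point process on $A$ with intensity $\lambda$ (with $\Lambda=\int_A\lambda(s)\mathrm ds<\infty$) is the random pair $\Xi=(M,\{S_1,\dots,S_M\})$ where $M\sim\mathrm{Poisson}(\Lambda)$ and, given $M=m$, $S_1,\dots,S_m$ are i.i.d. with density $\lambda(s)/\Lambda$ on $A$. Its density at $\xi=(m,\{s_1,\dots,s_m\})$ is $p(\xi)=\exp(-\Lambda)\prod_{i=1}^m\lambda(s_i)$, in the sense that for any suitable $g$, $\mathbb E_P[g(\Xi)]=\sum_{m=0}^\infty\frac{1}{m!}\int_{A^m}g(m,\{s_1,\dots,s_m\})\,p(m,\{s_1,\dots,s_m\})\,\mathrm ds_1\cdots\mathrm ds_m$. Similarly $q(\xi)=\exp(-H)\prod_{i=1}^m\eta(s_i)$ with $H=\int_A\eta$. *)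

theory Defs
  imports "HOL-Analysis.Analysis"
begin

type_synonym point = "real \<times> real"
type_synonym config = "nat \<times> point set"

definition total_intensity :: "point set \<Rightarrow> (point \<Rightarrow> real) \<Rightarrow> real" where
  "total_intensity A l = (LINT s:A|lborel. l s)"

definition ppp_density :: "point set \<Rightarrow> (point \<Rightarrow> real) \<Rightarrow> config \<Rightarrow> real" where
  "ppp_density A l \<xi> = exp (- total_intensity A l) * (\<Prod>s\<in>snd \<xi>. l s)"

definition ppp_expect :: "point set \<Rightarrow> (point \<Rightarrow> real) \<Rightarrow> (config \<Rightarrow> real) \<Rightarrow> real" where
  "ppp_expect A l g =
     (\<Sum>m. (1 / fact m) *
        (\<integral>x. g (m, x ` {..<m}) * ppp_density A l (m, x ` {..<m})
           \<partial>(PiM {..<m} (\<lambda>_. restrict_space lborel A))))"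

definition log_gamma_div :: "real \<Rightarrow> point set \<Rightarrow> (point \<Rightarrow> real) \<Rightarrow> (point \<Rightarrow> real) \<Rightarrow> real" where
  "log_gamma_div \<gamma> A l e =
     - (1 / \<gamma>) * ln (ppp_expect A l (\<lambda>\<xi>. ppp_density A e \<xi> powr \<gamma>) /
        ((ppp_expect A e (\<lambda>\<xi>. ppp_density A e \<xi> powr \<gamma>)) powr (\<gamma> / (\<gamma> + 1)) *
         (ppp_expect A l (\<lambda>\<xi>. ppp_density A l \<xi> powr \<gamma>)) powr (1 / (\<gamma> + 1))))"

definition beta_div :: "real \<Rightarrow> point set \<Rightarrow> (point \<Rightarrow> real) \<Rightarrow> (point \<Rightarrow> real) \<Rightarrow> real" where
  "beta_div \<beta> A l e =
     - (1 / \<beta>) * (LINT s:A|lborel. (l s * e s powr \<beta> - \<beta> / (\<beta> + 1) * e s powr (\<beta> + 1)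
                                     - 1 / (\<beta> + 1) * l s powr (\<beta> + 1)))"

end

theory Submission
  imports Defs
begin

text \<open>The points of a Poisson process are almost surely distinct, so for every \<open>h\<close> the
  \<open>m\<close>-th term of \<open>E\<^sub>P[\<Prod>\<^sub>i h(S\<^sub>i)]\<close> is \<open>e\<^sup>-\<^sup>\<Lambda> (\<integral>\<^sub>A h \<lambda>)\<^sup>m / m!\<close>, and the expectation is
  \<open>exp (\<integral>\<^sub>A h \<lambda> - \<Lambda>)\<close>. As \<open>q(\<xi>)\<^sup>\<gamma> = e\<^sup>-\<^sup>\<gamma>\<^sup>H \<Prod>\<^sub>i \<eta>(s\<^sub>i)\<^sup>\<gamma>\<close>, the three expectations in \<open>\<Delta>\<^sub>\<gamma>\<close> are
  exponentials of \<open>\<integral>\<^sub>A \<lambda>\<eta>\<^sup>\<gamma>\<close>, \<open>\<integral>\<^sub>A \<eta>\<^sup>\<gamma>\<^sup>+\<^sup>1\<close>, \<open>\<integral>\<^sub>A \<lambda>\<^sup>\<gamma>\<^sup>+\<^sup>1\<close> plus multiples of \<open>\<Lambda>\<close> and \<open>H\<close>; after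
  taking the logarithm, \<open>\<Lambda>\<close> and \<open>H\<close> cancel because the exponents \<open>\<gamma>/(\<gamma>+1)\<close> and \<open>1/(\<gamma>+1)\<close>
  sum to one.\<close>

text \<open>The right-hand side is a product of measurable functions of \<open>x\<close>, unlike the left.\<close>

lemma prod_image_eq_prod_first_occurrences:
  fixes x :: "nat \<Rightarrow> 'a" and f :: "'a \<Rightarrow> 'b::comm_monoid_mult"
  shows "(\<Prod>s\<in>x ` {..<m}. f s) = (\<Prod>i<m. if \<exists>j<i. x j = x i then 1 else f (x i))"
proof (induction m)
  case (Suc m)
  show ?case
  proof (cases "\<exists>j<m. x j = x m")
    case True
    then have "x m \<in> x ` {..<m}" by (metis image_eqI lessThan_iff)
    then have "x ` {..<Suc m} = x ` {..<m}" by (auto simp: lessThan_Suc)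
    with True Suc.IH show ?thesis by simp
  next
    case False
    then have "x m \<notin> x ` {..<m}" by auto
    then have "x ` {..<Suc m} = insert (x m) (x ` {..<m})" by (auto simp: lessThan_Suc)
    with Suc.IH \<open>x m \<notin> x ` {..<m}\<close> show ?thesis by (simp add: if_not_P[OF False] mult.commute)
  qed
qed simp

context
  fixes A :: "'a::euclidean_space set"
  assumes A: "A \<in> sets lborel"
begin

abbreviation sample_space :: "nat \<Rightarrow> (nat \<Rightarrow> 'a) measure" where
  "sample_space m \<equiv> PiM {..<m} (\<lambda>_. restrict_space lborel A)"

lemma product_sigma_finite_restrict_lborel: "product_sigma_finite (\<lambda>_::nat. restrict_space lborel A)"
  unfolding product_sigma_finite_def
  using sigma_finite_measure_restrict_space[OF lborel.sigma_finite_measure_axioms A] by simp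

lemma measurable_sample_space_component_comp:
  assumes "f \<in> borel_measurable (restrict_space lborel A)" "i < m"
  shows "(\<lambda>x. f (x i)) \<in> borel_measurable (sample_space m)"
proof -
  have "(\<lambda>x. x i) \<in> sample_space m \<rightarrow>\<^sub>M restrict_space lborel A"
    using assms(2) by (intro measurable_component_singleton) simp
  from measurable_comp[OF this assms(1)] show ?thesis by (simp add: o_def)
qed

lemma sets_sample_space_diagonal:
  assumes "i < m" "j < m"
  shows "{x \<in> space (sample_space m). x j = x i} \<in> sets (sample_space m)"
  using assms
  by (intro measurable_equality_set measurable_sample_space_component_comp measurable_restrict_space1)
    simp_all

lemma emeasure_sample_space_diagonal:
  assumes "i < m" "j < m" "i \<noteq> j"
  shows "emeasure (sample_space m) {x \<in> space (sample_space m). x j = x i} = 0"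
proof -
  interpret product_sigma_finite "\<lambda>_::nat. restrict_space lborel A"
    by (rule product_sigma_finite_restrict_lborel)
  define I where "I = {..<m} - {i}"
  define N where "N = {x \<in> space (sample_space m). x j = x i}"
  have m_eq: "{..<m} = insert i I" and I: "finite I" "i \<notin> I" "j \<in> I"
    using assms unfolding I_def by auto
  have N: "N \<in> sets (PiM (insert i I) (\<lambda>_. restrict_space lborel A))"
    unfolding N_def m_eq[symmetric] using assms(1,2) by (rule sets_sample_space_diagonal)
  have "emeasure (sample_space m) N
      = (\<integral>\<^sup>+ x. indicator N x \<partial>PiM (insert i I) (\<lambda>_. restrict_space lborel A))"
    using N m_eq by simp
  also have "\<dots> = (\<integral>\<^sup>+ x. (\<integral>\<^sup>+ y. indicator N (x(i := y)) \<partial>restrict_space lborel A)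
           \<partial>PiM I (\<lambda>_. restrict_space lborel A))"
    by (rule product_nn_integral_insert[OF I(1,2)]) (use N in measurable)
  also have "\<dots> = 0"
  proof -
    have "(\<integral>\<^sup>+ y. indicator N (x(i := y)) \<partial>restrict_space lborel A) = 0" for x
    proof -
      have "(\<integral>\<^sup>+ y. indicator N (x(i := y)) \<partial>restrict_space lborel A)
          = (\<integral>\<^sup>+ y. indicator N (x(i := y)) * indicator A y \<partial>lborel)"
        using A by (subst nn_integral_restrict_space) auto
      also have "\<dots> \<le> (\<integral>\<^sup>+ y. indicator {x j} y \<partial>lborel)"
        using I assms by (intro nn_integral_mono) (auto simp: N_def indicator_def)
      also have "\<dots> = 0"
        by (simp add: emeasure_lborel_countable)
      finally show ?thesis by simp
    qed
    then show ?thesis by simp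
  qed
  finally show ?thesis unfolding N_def .
qed

lemma AE_sample_space_inj_on: "AE x in sample_space m. inj_on x {..<m}"
proof -
  have "AE x in sample_space m. \<forall>i\<in>{..<m}. \<forall>j\<in>{..<m}. i \<noteq> j \<longrightarrow> x j \<noteq> x i"
  proof (intro AE_finite_allI finite_lessThan)
    fix i j assume ij: "i \<in> {..<m}" "j \<in> {..<m}"
    show "AE x in sample_space m. i \<noteq> j \<longrightarrow> x j \<noteq> x i"
    proof (cases "i = j")
      case False
      with ij have "{x \<in> space (sample_space m). x j = x i} \<in> null_sets (sample_space m)"
        by (auto intro!: null_setsI emeasure_sample_space_diagonal sets_sample_space_diagonal)
      then show ?thesis by (rule AE_I') auto
    qed simp
  qed
  then show ?thesis
    by eventually_elim (metis inj_on_def lessThan_iff)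
qed

lemma borel_measurable_sample_space_prod_image:
  fixes f :: "'a \<Rightarrow> real"
  assumes f: "f \<in> borel_measurable (restrict_space lborel A)"
  shows "(\<lambda>x. \<Prod>s\<in>x ` {..<m}. f s) \<in> borel_measurable (sample_space m)"
proof -
  have repeated: "{x \<in> space (sample_space m). \<exists>j<i. x j = x i} \<in> sets (sample_space m)"
    if "i < m" for i
  proof -
    have "{x \<in> space (sample_space m). \<exists>j<i. x j = x i}
        = (\<Union>j<i. {x \<in> space (sample_space m). x j = x i})" by auto
    also have "\<dots> \<in> sets (sample_space m)"
      using that by (intro sets.finite_UN sets_sample_space_diagonal) auto
    finally show ?thesis .
  qed
  have "(\<lambda>x. \<Prod>i<m. if \<exists>j<i. x j = x i then 1 else f (x i)) \<in> borel_measurable (sample_space m)"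
  proof (rule borel_measurable_prod)
    fix i assume "i \<in> {..<m}"
    then show "(\<lambda>x. if \<exists>j<i. x j = x i then 1 else f (x i)) \<in> borel_measurable (sample_space m)"
      by (intro measurable_If[OF measurable_const measurable_sample_space_component_comp[OF f] repeated])
        simp_all
  qed
  then show ?thesis by (simp only: prod_image_eq_prod_first_occurrences)
qed

lemma integral_sample_space_prod_image:
  fixes f :: "'a \<Rightarrow> real"
  assumes f: "set_integrable lborel A f"
  shows "(\<integral>x. (\<Prod>s\<in>x ` {..<m}. f s) \<partial>sample_space m) = (LINT s:A|lborel. f s) ^ m"
proof -
  interpret product_sigma_finite "\<lambda>_::nat. restrict_space lborel A"
    by (rule product_sigma_finite_restrict_lborel)
  have A': "A \<inter> space lborel \<in> sets lborel" using A by simp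
  have f': "integrable (restrict_space lborel A) f"
    using f unfolding set_integrable_def by (subst integrable_restrict_space[OF A'])
  have "(\<integral>x. (\<Prod>s\<in>x ` {..<m}. f s) \<partial>sample_space m) = (\<integral>x. (\<Prod>i<m. f (x i)) \<partial>sample_space m)"
  proof (rule integral_cong_AE)
    show "AE x in sample_space m. (\<Prod>s\<in>x ` {..<m}. f s) = (\<Prod>i<m. f (x i))"
      using AE_sample_space_inj_on by eventually_elim (simp add: prod.reindex)
  next
    show "(\<lambda>x. \<Prod>s\<in>x ` {..<m}. f s) \<in> borel_measurable (sample_space m)"
      using f' by (intro borel_measurable_sample_space_prod_image) simp
    show "(\<lambda>x. \<Prod>i<m. f (x i)) \<in> borel_measurable (sample_space m)"
      using f' by (intro borel_measurable_prod measurable_sample_space_component_comp) simp_all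
  qed
  also have "\<dots> = (\<Prod>i<m. integral\<^sup>L (restrict_space lborel A) f)"
    using f' by (intro product_integral_prod) auto
  also have "\<dots> = (LINT s:A|lborel. f s) ^ m"
    by (simp add: set_lebesgue_integral_def integral_restrict_space[OF A'])
  finally show ?thesis .
qed

lemma sums_exp_set_integral_prod_image:
  fixes h :: "'a \<Rightarrow> real"
  assumes "set_integrable lborel A h"
  shows "(\<lambda>m. (1 / fact m) * (\<integral>x. (\<Prod>s\<in>x ` {..<m}. h s) \<partial>sample_space m))
           sums exp (LINT s:A|lborel. h s)"
  using exp_converges[of "LINT s:A|lborel. h s"]
  by (simp add: integral_sample_space_prod_image[OF assms] field_simps)

end

lemma ppp_density_powr_mult:
  "ppp_density A e (m, S) powr \<gamma> * ppp_density A l (m, S)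
     = exp (- \<gamma> * total_intensity A e - total_intensity A l) * (\<Prod>s\<in>S. e s powr \<gamma> * l s)"
  unfolding ppp_density_def snd_conv powr_mult exp_powr_real prod_powr_distrib
  by (simp add: prod.distrib exp_diff exp_minus field_simps)

lemma ppp_expect_density_powr:
  assumes A: "A \<in> sets lborel"
    and h: "set_integrable lborel A h"
    and h_eq: "\<forall>s\<in>A. e s powr \<gamma> * l s = h s"
  shows "ppp_expect A l (\<lambda>\<xi>. ppp_density A e \<xi> powr \<gamma>)
     = exp (- \<gamma> * total_intensity A e - total_intensity A l + (LINT s:A|lborel. h s))"
proof -
  define c where "c = exp (- \<gamma> * total_intensity A e - total_intensity A l)"
  have term_eq:
    "(\<integral>x. ppp_density A e (m, x ` {..<m}) powr \<gamma> * ppp_density A l (m, x ` {..<m})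
        \<partial>sample_space A m)
     = c * (\<integral>x. (\<Prod>s\<in>x ` {..<m}. h s) \<partial>sample_space A m)" for m
  proof -
    have "ppp_density A e (m, x ` {..<m}) powr \<gamma> * ppp_density A l (m, x ` {..<m})
        = c * (\<Prod>s\<in>x ` {..<m}. h s)"
      if "x \<in> space (sample_space A m)" for x
    proof -
      from that have "x ` {..<m} \<subseteq> A"
        by (auto simp: space_PiM space_restrict_space PiE_iff)
      with h_eq show ?thesis
        unfolding ppp_density_powr_mult c_def by (intro arg_cong2[where f = "(*)"] prod.cong) auto
    qed
    then have "(\<integral>x. ppp_density A e (m, x ` {..<m}) powr \<gamma> * ppp_density A l (m, x ` {..<m})
        \<partial>sample_space A m) = (\<integral>x. c * (\<Prod>s\<in>x ` {..<m}. h s) \<partial>sample_space A m)"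
      by (rule Bochner_Integration.integral_cong[OF refl])
    then show ?thesis by simp
  qed
  have "(\<lambda>m. (1 / fact m) * (c * (\<integral>x. (\<Prod>s\<in>x ` {..<m}. h s) \<partial>sample_space A m)))
      sums (c * exp (LINT s:A|lborel. h s))"
    using sums_mult[OF sums_exp_set_integral_prod_image[OF A h], of c] by (simp add: mult_ac)
  then show ?thesis
    unfolding ppp_expect_def term_eq c_def by (simp add: sums_iff exp_add)
qed

lemma ppp_expect_own_density_powr:
  assumes "A \<in> sets lborel" "\<forall>s\<in>A. l s > 0"
    and "set_integrable lborel A (\<lambda>s. l s powr (\<gamma> + 1))"
  shows "ppp_expect A l (\<lambda>\<xi>. ppp_density A l \<xi> powr \<gamma>)
     = exp (- (\<gamma> + 1) * total_intensity A l + (LINT s:A|lborel. l s powr (\<gamma> + 1)))"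
  using assms
  by (subst ppp_expect_density_powr[where h = "\<lambda>s. l s powr (\<gamma> + 1)"])
     (auto simp: powr_add algebra_simps)

lemma log_gamma_div_eq_integrals:
  assumes A: "A \<in> sets lborel" and "\<gamma> \<noteq> -1"
    and l: "\<forall>s\<in>A. l s > 0" and e: "\<forall>s\<in>A. e s > 0"
    and "set_integrable lborel A (\<lambda>s. l s * e s powr \<gamma>)"
    and "set_integrable lborel A (\<lambda>s. e s powr (\<gamma> + 1))"
    and "set_integrable lborel A (\<lambda>s. l s powr (\<gamma> + 1))"
  shows "log_gamma_div \<gamma> A l e
     = - (1 / \<gamma>) * ((LINT s:A|lborel. l s * e s powr \<gamma>)
                     - \<gamma> / (\<gamma> + 1) * (LINT s:A|lborel. e s powr (\<gamma> + 1))
                     - 1 / (\<gamma> + 1) * (LINT s:A|lborel. l s powr (\<gamma> + 1)))"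
proof -
  define L H where "L = total_intensity A l" and "H = total_intensity A e"
  define I\<^sub>1 I\<^sub>2 I\<^sub>3 where "I\<^sub>1 = (LINT s:A|lborel. l s * e s powr \<gamma>)"
    and "I\<^sub>2 = (LINT s:A|lborel. e s powr (\<gamma> + 1))" and "I\<^sub>3 = (LINT s:A|lborel. l s powr (\<gamma> + 1))"
  have "ppp_expect A l (\<lambda>\<xi>. ppp_density A e \<xi> powr \<gamma>) = exp (- \<gamma> * H - L + I\<^sub>1)"
    unfolding L_def H_def I\<^sub>1_def using assms by (intro ppp_expect_density_powr) (simp_all add: mult.commute)
  moreover have "ppp_expect A e (\<lambda>\<xi>. ppp_density A e \<xi> powr \<gamma>) = exp (- (\<gamma> + 1) * H + I\<^sub>2)"
    unfolding H_def I\<^sub>2_def using assms by (intro ppp_expect_own_density_powr)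
  moreover have "ppp_expect A l (\<lambda>\<xi>. ppp_density A l \<xi> powr \<gamma>) = exp (- (\<gamma> + 1) * L + I\<^sub>3)"
    unfolding L_def I\<^sub>3_def using assms by (intro ppp_expect_own_density_powr)
  ultimately have "log_gamma_div \<gamma> A l e
      = - (1 / \<gamma>) * ((- \<gamma> * H - L + I\<^sub>1) - (- (\<gamma> + 1) * H + I\<^sub>2) * (\<gamma> / (\<gamma> + 1))
                     - (- (\<gamma> + 1) * L + I\<^sub>3) * (1 / (\<gamma> + 1)))"
    unfolding log_gamma_div_def
    by (simp add: exp_powr_real exp_add[symmetric] exp_diff[symmetric] del: exp_add exp_diff)
  also have "\<dots> = - (1 / \<gamma>) * (I\<^sub>1 - \<gamma> / (\<gamma> + 1) * I\<^sub>2 - 1 / (\<gamma> + 1) * I\<^sub>3)"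
    using \<open>\<gamma> \<noteq> -1\<close> by (simp add: field_simps)
  finally show ?thesis unfolding I\<^sub>1_def I\<^sub>2_def I\<^sub>3_def .
qed

theorem mainTheorem10:
  fixes A :: "(real \<times> real) set" and \<gamma> \<beta> :: real and l e :: "real \<times> real \<Rightarrow> real"
  assumes "A \<in> sets lborel"
    and "\<gamma> \<noteq> 0" and "\<gamma> \<noteq> -1"
    and "\<forall>s\<in>A. l s > 0" and "\<forall>s\<in>A. e s > 0"
    and "set_integrable lborel A l"
    and "set_integrable lborel A e"
    and "set_integrable lborel A (\<lambda>s. l s powr (\<gamma> + 1))"
    and "set_integrable lborel A (\<lambda>s. e s powr (\<gamma> + 1))"
    and "set_integrable lborel A (\<lambda>s. l s * e s powr \<gamma>)"
    and "\<beta> = \<gamma>"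
  shows "log_gamma_div \<gamma> A l e = beta_div \<beta> A l e"
proof -
  have "beta_div \<gamma> A l e
     = - (1 / \<gamma>) * ((LINT s:A|lborel. l s * e s powr \<gamma>)
                     - \<gamma> / (\<gamma> + 1) * (LINT s:A|lborel. e s powr (\<gamma> + 1))
                     - 1 / (\<gamma> + 1) * (LINT s:A|lborel. l s powr (\<gamma> + 1)))"
    unfolding beta_div_def using assms(8-10) by (simp add: set_integral_diff)
  with assms(1,3-5,8-11) show ?thesis
    by (simp add: log_gamma_div_eq_integrals)
qed

end
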